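(* For $\epsilon$ sufficiently small, let $\mathcal K[h]$ denote the solution of the transport problem (T) with $H=0$ and boundary data $h\in L^\infty(\{\sin\phi>0\})$. Then for any $0\le\beta\le1$, $$\|\mathrm e^{\beta\eta}\mathcal K[h]\|_{L^\infty}\le\|h\|_{L^\infty_+};\quad\text{in particular } \|\mathcal K[h]\|_{L^\infty}\le\|h\|_{L^\infty_+}.$$
   Context: Fix $0<n<\tfrac12$, $R_1,R_2>0$; for $0<\epsilon<1$ let $L=\epsilon^{-n}$ and $F(\eta,\psi)=-\epsilon\big(\frac{\sin^2\psi}{R_1-\epsilon\eta}+\frac{\cos^2\psi}{R_2-\epsilon\eta}\big)$. Transport problem (T) for $f(\eta,\phi,\psi)$ on $[0,L]\times[-\pi/2,\pi/2]\times[-\pi,\pi]$: $\sin\phi\,\partial_\eta f+F(\eta,\psi)\cos\phi\,\partial_\phi f+f=H(\eta,\phi,\psi)$, $f(0,\phi,\psi)=h(\phi,\psi)$ for $\sin\phi>0$, $f(L,\phi,\psi)=f(L,-\phi,\psi)$ (solved along characteristics). $\|\cdot\|_{L^\infty}$ is the essential sup over $[0,L]\times[-\pi/2,\pi/2]\times[-\pi,\pi]$ and $\|h\|_{L^\infty_+}$ the essential sup over $\{\sin\phi>0\}$. *)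

theory Defs
  imports "HOL-Analysis.Analysis" "HOL-Probability.Essential_Supremum"
begin

definition Lcut :: "real \<Rightarrow> real \<Rightarrow> real" where
  "Lcut n eps = eps powr (-n)"

definition Fcoef :: "real \<Rightarrow> real \<Rightarrow> real \<Rightarrow> real \<Rightarrow> real \<Rightarrow> real" where
  "Fcoef R1 R2 eps eta psi =
     - eps * ((sin psi)^2 / (R1 - eps * eta) + (cos psi)^2 / (R2 - eps * eta))"

text \<open>G(eta,psi) = integral of F from 0 to eta.  Along a characteristic (psi fixed)
  d(cos phi)/d eta = - F cos phi, hence cos phi * exp (G eta psi) is conserved.\<close>
definition Gint :: "real \<Rightarrow> real \<Rightarrow> real \<Rightarrow> real \<Rightarrow> real \<Rightarrow> real" where
  "Gint R1 R2 eps eta psi = integral {0..eta} (\<lambda>y. Fcoef R1 R2 eps y psi)"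

definition cchar :: "real \<Rightarrow> real \<Rightarrow> real \<Rightarrow> real \<Rightarrow> real \<Rightarrow> real \<Rightarrow> real" where
  "cchar R1 R2 eps eta phi psi = cos phi * exp (Gint R1 R2 eps eta psi)"

text \<open>Travel time (arclength parameter s, with d eta/ds = sin phi) along the characteristic
  with constant c between heights a \<le> b: integral of 1/|sin phi|, where
  |sin phi(y)| = sqrt (1 - (c * exp (- G y))^2).\<close>
definition ttime :: "real \<Rightarrow> real \<Rightarrow> real \<Rightarrow> real \<Rightarrow> real \<Rightarrow> real \<Rightarrow> real \<Rightarrow> real" where
  "ttime R1 R2 eps psi c a b =
     integral {a..b} (\<lambda>y. 1 / sqrt (1 - (c * exp (- Gint R1 R2 eps y psi))^2))"

text \<open>Highest point reached by the backward characteristic starting from height eta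
  with sin phi \<le> 0: the turning point (where cos phi = 1) if it lies in [eta, L],
  otherwise the specular reflection wall L.\<close>
definition turnpt :: "real \<Rightarrow> real \<Rightarrow> real \<Rightarrow> real \<Rightarrow> real \<Rightarrow> real \<Rightarrow> real \<Rightarrow> real" where
  "turnpt n R1 R2 eps psi c eta =
     (if \<exists>y\<in>{eta..Lcut n eps}. c * exp (- Gint R1 R2 eps y psi) \<ge> 1
      then Inf {y\<in>{eta..Lcut n eps}. c * exp (- Gint R1 R2 eps y psi) \<ge> 1}
      else Lcut n eps)"

text \<open>K[h]: solution of (T) with H = 0 and inflow data h, obtained by following the
  characteristic backwards to eta = 0 (through the turning point or the
  reflection at eta = L) and multiplying by exp(-travel time).  At eta = 0 the
  incoming angle is arccos c, with sin > 0.\<close>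
definition Ksol :: "real \<Rightarrow> real \<Rightarrow> real \<Rightarrow> real \<Rightarrow> (real \<times> real \<Rightarrow> real)
                    \<Rightarrow> real \<times> real \<times> real \<Rightarrow> real" where
  "Ksol n R1 R2 eps h = (\<lambda>(eta, phi, psi).
     (let c = cchar R1 R2 eps eta phi psi;
          phi0 = arccos c
      in if sin phi > 0
         then h (phi0, psi) * exp (- ttime R1 R2 eps psi c 0 eta)
         else (let m = turnpt n R1 R2 eps psi c eta in
               h (phi0, psi) * exp (- (ttime R1 R2 eps psi c 0 m + ttime R1 R2 eps psi c eta m)))))"

definition Dom :: "real \<Rightarrow> real \<Rightarrow> (real \<times> real \<times> real) set" where
  "Dom n eps = {0..Lcut n eps} \<times> {-pi/2..pi/2} \<times> {-pi..pi}"

definition Dplus :: "(real \<times> real) set" where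
  "Dplus = {phi\<in>{-pi/2..pi/2}. sin phi > 0} \<times> {-pi..pi}"

end

theory Submission
  imports Defs
begin

text \<open>Along a characteristic the solution with H = 0 is the inflow value of h damped by exp (- s),
  where s is the arclength travelled backwards to the inflow boundary.  Since d eta / ds = sin phi
  has modulus at most 1, s is at least eta, hence at least beta eta, and so
  abs (exp (beta eta) K[h]) is bounded by abs h at the foot of the characteristic.  For small eps
  the primitive G of F is explicit and strictly decreasing on [0, L]; then cos phi grows at least
  linearly along a characteristic, so the travel time stays finite through a turning point.
  Passing to essential suprema requires K[h] to be measurable and the foot map to pull null sets
  back to null sets; away from phi = 0 the foot map is inverted by two differentiable maps.\<close>

section \<open>The explicit primitive of F\<close>

definition Gclosed :: "real \<Rightarrow> real \<Rightarrow> real \<Rightarrow> real \<Rightarrow> real \<Rightarrow> real" where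
  "Gclosed R1 R2 eps y psi = (sin psi)^2 * ln (1 - eps * y / R1) + (cos psi)^2 * ln (1 - eps * y / R2)"

lemma Gclosed_measurable [measurable]:
  assumes [measurable]: "f \<in> borel_measurable M" "g \<in> borel_measurable M"
  shows "(\<lambda>x. Gclosed R1 R2 eps (f x) (g x)) \<in> borel_measurable M"
  unfolding Gclosed_def by measurable

lemma Gclosed_has_real_derivative:
  assumes "0 < R1" "0 < R2" "eps * y < R1" "eps * y < R2"
  shows "((\<lambda>y. Gclosed R1 R2 eps y psi) has_real_derivative Fcoef R1 R2 eps y psi) (at y within S)"
proof -
  have pos: "0 < 1 - eps * y / R1" "0 < 1 - eps * y / R2"
    using assms by (auto simp: field_simps)
  have "((\<lambda>y. Gclosed R1 R2 eps y psi) has_real_derivative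
      (sin psi)^2 * (- (eps / R1) / (1 - eps * y / R1)) + (cos psi)^2 * (- (eps / R2) / (1 - eps * y / R2)))
      (at y within S)"
    unfolding Gclosed_def using pos assms(1,2) by (auto intro!: derivative_eq_intros simp: algebra_simps)
  moreover have "(sin psi)^2 * (- (eps / R1) / (1 - eps * y / R1)) + (cos psi)^2 * (- (eps / R2) / (1 - eps * y / R2))
      = Fcoef R1 R2 eps y psi"
    unfolding Fcoef_def using assms pos by (auto simp: field_simps)
  ultimately show ?thesis by simp
qed

lemma Gint_eq_Gclosed:
  assumes "0 < R1" "0 < R2" "0 \<le> eps" "0 \<le> eta" "eps * eta < R1" "eps * eta < R2"
  shows "Gint R1 R2 eps eta psi = Gclosed R1 R2 eps eta psi"
proof -
  have "((\<lambda>y. Fcoef R1 R2 eps y psi) has_integral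
      (Gclosed R1 R2 eps eta psi - Gclosed R1 R2 eps 0 psi)) {0..eta}"
  proof (rule fundamental_theorem_of_calculus)
    fix y assume y: "y \<in> {0..eta}"
    then have "eps * y \<le> eps * eta" using assms by (auto intro: mult_left_mono)
    then show "((\<lambda>y. Gclosed R1 R2 eps y psi) has_vector_derivative Fcoef R1 R2 eps y psi)
        (at y within {0..eta})"
      using assms by (auto intro!: Gclosed_has_real_derivative
          simp: has_real_derivative_iff_has_vector_derivative[symmetric])
  qed (use assms in auto)
  then show ?thesis unfolding Gint_def by (simp add: integral_unique Gclosed_def)
qed

text \<open>On the characteristic with invariant c (see cchar), cos phi at height y is
  cos_along c psi y, and arclength_rate c psi y = 1 / abs (sin phi) is the integrand of ttime.\<close>
definition cos_along :: "real \<Rightarrow> real \<Rightarrow> real \<Rightarrow> real \<Rightarrow> real \<Rightarrow> real \<Rightarrow> real" where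
  "cos_along R1 R2 eps c psi y = c * exp (- Gclosed R1 R2 eps y psi)"

definition arclength_rate :: "real \<Rightarrow> real \<Rightarrow> real \<Rightarrow> real \<Rightarrow> real \<Rightarrow> real \<Rightarrow> real" where
  "arclength_rate R1 R2 eps c psi y = 1 / sqrt (1 - (cos_along R1 R2 eps c psi y)^2)"

lemma arclength_rate_measurable [measurable]:
  assumes [measurable]: "f \<in> borel_measurable M" "g \<in> borel_measurable M" "k \<in> borel_measurable M"
  shows "(\<lambda>x. arclength_rate R1 R2 eps (f x) (g x) (k x)) \<in> borel_measurable M"
  unfolding arclength_rate_def cos_along_def by measurable

lemma integrable_on_powr_minus_half_dist:
  fixes a b :: real
  assumes "a \<le> b"
  shows "(\<lambda>x. (b - x) powr (-1/2)) integrable_on {a..b}"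
proof -
  have "((\<lambda>x. x powr (-1/2)) has_integral ((b - a) powr (-1/2 + 1) / (-1/2 + 1))) {0..b - a}"
    by (rule has_integral_powr_from_0) (use assms in auto)
  then have "((\<lambda>x. (-x) powr (-1/2)) has_integral ((b - a) powr (-1/2 + 1) / (-1/2 + 1))) {-(b - a)..-0}"
    by (subst has_integral_reflect_real)
  then have "((\<lambda>x. (-(x + (-b))) powr (-1/2)) has_integral ((b - a) powr (-1/2 + 1) / (-1/2 + 1)))
      {-(b - a) - (-b)..-0 - (-b)}"
    by (rule has_integral_shift_real_ivl)
  then show ?thesis by (auto simp: integrable_on_def)
qed

lemma integrable_on_inverse_sqrt_one_minus_square:
  fixes q :: "real \<Rightarrow> real"
  assumes q: "continuous_on {a..b} q" and "0 < d"
    and nonneg: "\<And>y. y \<in> {a..b} \<Longrightarrow> 0 \<le> q y"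
    and gap: "\<And>y. y \<in> {a..b} \<Longrightarrow> d * (b - y) \<le> 1 - q y"
  shows "(\<lambda>y. 1 / sqrt (1 - (q y)^2)) integrable_on {a..b}"
proof (cases "a \<le> b")
  case True
  define k where "k y = d powr (-1/2) * (b - y) powr (-1/2)" for y
  have k: "k integrable_on {a..b}"
    unfolding k_def by (intro integrable_on_mult_right integrable_on_powr_minus_half_dist True)
  have [measurable]: "q \<in> borel_measurable (lebesgue_on {a..b})"
    by (rule continuous_imp_measurable_on_sets_lebesgue[OF q]) auto
  have [measurable]: "(\<lambda>y. y) \<in> borel_measurable (lebesgue_on {a..b})"
    using id_borel_measurable_lebesgue_on by (simp add: id_def)
  \<comment> \<open>k vanishes at b (as 0 powr -1/2 = 0) while the integrand need not, so b is cut out first\<close>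
  have bound: "\<bar>if y = b then 0 else 1 / sqrt (1 - (q y)^2)\<bar> \<le> k y" if y: "y \<in> {a..b}" for y
  proof (cases "y = b")
    case False
    then have "0 < d * (b - y)" using y \<open>0 < d\<close> by simp
    moreover have "d * (b - y) \<le> 1 - (q y)^2"
    proof -
      have "q y \<le> 1" using gap[OF y] \<open>0 < d * (b - y)\<close> by linarith
      then have "(q y)^2 \<le> q y" using nonneg[OF y] by (simp add: power2_eq_square mult_left_le_one_le)
      then show ?thesis using gap[OF y] by linarith
    qed
    ultimately have "1 / sqrt (1 - (q y)^2) \<le> 1 / sqrt (d * (b - y))"
      by (intro divide_left_mono) auto
    also have "\<dots> = k y"
      unfolding k_def using \<open>0 < d\<close> y False
      by (simp add: powr_minus_divide powr_half_sqrt[symmetric] powr_mult[symmetric] divide_simps)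
    finally show ?thesis using \<open>0 < d * (b - y)\<close> \<open>d * (b - y) \<le> 1 - (q y)^2\<close> False by simp
  qed (simp add: k_def)
  have "(\<lambda>y. if y = b then 0 else 1 / sqrt (1 - (q y)^2)) integrable_on {a..b}"
    by (rule measurable_bounded_by_integrable_imp_integrable_real[OF _ k bound]) auto
  then show ?thesis
    by (rule integrable_spike_finite[of "{b}", rotated 2]) auto
qed (simp add: integrable_on_empty)

lemma first_hitting_point:
  fixes q :: "real \<Rightarrow> real"
  assumes "a \<le> b" and q: "continuous_on {a..b} q" "mono_on {a..b} q" and "q a \<le> 1"
  defines "m \<equiv> (if \<exists>y\<in>{a..b}. 1 \<le> q y then Inf {y\<in>{a..b}. 1 \<le> q y} else b)"
  shows "a \<le> m" "m \<le> b" "\<And>y. a \<le> y \<Longrightarrow> y < m \<Longrightarrow> q y < 1" "q m \<le> 1"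
    "\<And>t. m \<le> t \<longleftrightarrow> b \<le> t \<or> (a \<le> t \<and> t \<le> b \<and> 1 \<le> q t)"
proof -
  define S where "S = {y\<in>{a..b}. 1 \<le> q y}"
  have "a \<le> m \<and> m \<le> b \<and> (\<forall>y. a \<le> y \<and> y < m \<longrightarrow> q y < 1) \<and> q m \<le> 1 \<and>
     (\<forall>t. m \<le> t \<longleftrightarrow> b \<le> t \<or> (a \<le> t \<and> t \<le> b \<and> 1 \<le> q t))"
  proof (cases "S = {}")
    case True
    then have "m = b" and below: "\<And>y. a \<le> y \<Longrightarrow> y \<le> b \<Longrightarrow> q y < 1"
      unfolding m_def S_def by force+
    then show ?thesis using \<open>a \<le> b\<close> by (force simp: not_le)
  next
    case False
    then have m: "m = Inf S" unfolding m_def S_def by auto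
    have "closed S" unfolding S_def
      by (rule continuous_on_closed_Collect_le[OF continuous_on_const q(1)]) simp
    moreover have bdd: "bdd_below S" unfolding S_def by (auto intro!: bdd_belowI[of _ a])
    ultimately have "m \<in> S" unfolding m using closed_contains_Inf False by blast
    then have mS: "a \<le> m" "m \<le> b" "1 \<le> q m" unfolding S_def by auto
    have least: "\<And>y. y \<in> S \<Longrightarrow> m \<le> y" unfolding m using bdd by (auto intro: cInf_lower)
    then have below: "q y < 1" if "a \<le> y" "y < m" for y
      using that mS unfolding S_def by force
    have "q m \<le> 1"
    proof -
      have "continuous_on {a..m} q" using q(1) by (rule continuous_on_subset) (use mS in auto)
      then obtain z where z: "a \<le> z" "z \<le> m" "q z = 1"
        using IVT'[of q a 1 m] \<open>q a \<le> 1\<close> mS by auto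
      then have "z = m" using least[of z] mS unfolding S_def by force
      then show ?thesis using z by simp
    qed
    moreover have "m \<le> t \<longleftrightarrow> b \<le> t \<or> (a \<le> t \<and> t \<le> b \<and> 1 \<le> q t)" for t
      using mS least[of t] q(2)[THEN mono_onD, of m t] unfolding S_def by force
    ultimately show ?thesis using mS below by blast
  qed
  then show "a \<le> m" "m \<le> b" "\<And>y. a \<le> y \<Longrightarrow> y < m \<Longrightarrow> q y < 1" "q m \<le> 1"
    "\<And>t. m \<le> t \<longleftrightarrow> b \<le> t \<or> (a \<le> t \<and> t \<le> b \<and> 1 \<le> q t)"
    by auto
qed

lemma negligible_UNIV_Times:
  fixes B :: "'b :: euclidean_space set"
  assumes "negligible B"
  shows "negligible ((UNIV :: 'a :: euclidean_space set) \<times> B)"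
proof -
  from assms obtain N where N: "N \<in> null_sets lborel" "B \<subseteq> N"
    using negligible_iff_null_sets null_sets_completion_iff2 by metis
  have "(UNIV :: 'a set) \<times> N \<in> null_sets (lborel \<Otimes>\<^sub>M lborel)"
    using N(1) by (intro lborel.times_in_null_sets2) auto
  then have "(UNIV :: 'a set) \<times> N \<in> null_sets lebesgue"
    unfolding lborel_prod by (rule null_sets_completionI)
  then show ?thesis
    by (simp add: negligible_iff_null_sets[symmetric]) (rule negligible_subset, use N(2) in auto)
qed

lemma negligible_snd_fst_eq_0: "negligible {x :: real \<times> real \<times> real. fst (snd x) = 0}"
proof -
  have "{x :: real \<times> real \<times> real. fst (snd x) = 0} = {x. (0 :: real, 1 :: real, 0 :: real) \<bullet> x = 0}"
    by (auto simp: inner_prod_def)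
  then show ?thesis using negligible_hyperplane[of "(0 :: real, 1 :: real, 0 :: real)" 0]
    by (simp add: zero_prod_def)
qed

lemma borel_measurable_lebesgue_on_diff_negligible:
  fixes f :: "'a :: euclidean_space \<Rightarrow> real"
  assumes S: "S \<in> sets lebesgue" and Z: "negligible Z"
    and f: "f \<in> borel_measurable (lebesgue_on (S - Z))"
  shows "f \<in> borel_measurable (lebesgue_on S)"
proof (subst borel_measurable_iff_le, intro allI)
  fix a
  have SZ: "S - Z \<in> sets lebesgue" using S negligible_imp_sets[OF Z] by auto
  then have "{w \<in> S - Z. f w \<le> a} \<in> sets lebesgue"
    using f by (simp add: borel_measurable_iff_le sets_restrict_space_iff)
  moreover have "{w \<in> S \<inter> Z. f w \<le> a} \<in> sets lebesgue"
    by (rule negligible_imp_sets, rule negligible_subset[OF Z]) auto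
  moreover have "{w \<in> S. f w \<le> a} = {w \<in> S - Z. f w \<le> a} \<union> {w \<in> S \<inter> Z. f w \<le> a}" by auto
  ultimately show "{w \<in> space (lebesgue_on S). f w \<le> a} \<in> sets (lebesgue_on S)"
    using S by (simp add: sets_restrict_space_iff)
qed

lemma borel_measurable_lebesgue_on_borel:
  "f \<in> borel_measurable borel \<Longrightarrow> f \<in> borel_measurable (lebesgue_on S)"
  by (rule measurable_restrict_space1, rule measurable_completion) simp

lemma fst_borel_measurable [measurable]:
  "(fst :: 'a :: second_countable_topology \<times> 'b :: second_countable_topology \<Rightarrow> 'a) \<in> borel_measurable borel"
  by (subst borel_prod[symmetric]) measurable

lemma snd_borel_measurable [measurable]:
  "(snd :: 'a :: second_countable_topology \<times> 'b :: second_countable_topology \<Rightarrow> 'b) \<in> borel_measurable borel"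
  by (subst borel_prod[symmetric]) measurable

lemma sets_lebesgue_of_borel: "A \<in> sets borel \<Longrightarrow> A \<in> sets lebesgue"
  by (rule sets_completionI_sets) simp

lemma Dom_sets_lebesgue: "Dom n eps \<in> sets lebesgue"
  unfolding Dom_def by (intro sets_lebesgue_of_borel borel_closed closed_Times) auto

lemma Dplus_sets_lebesgue: "Dplus \<in> sets lebesgue"
proof -
  have "Dplus = {p. fst p \<in> {-pi/2..pi/2} \<and> 0 < sin (fst p) \<and> snd p \<in> {-pi..pi}}"
    unfolding Dplus_def by auto
  also have "\<dots> \<in> sets borel" by measurable
  finally show ?thesis by (rule sets_lebesgue_of_borel)
qed

section \<open>Characteristics in a thin layer\<close>

definition inflow_point :: "real \<Rightarrow> real \<Rightarrow> real \<Rightarrow> real \<times> real \<times> real \<Rightarrow> real \<times> real" where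
  "inflow_point R1 R2 eps = (\<lambda>(eta, phi, psi). (arccos (cchar R1 R2 eps eta phi psi), psi))"

definition backward_time :: "real \<Rightarrow> real \<Rightarrow> real \<Rightarrow> real \<Rightarrow> real \<times> real \<times> real \<Rightarrow> real" where
  "backward_time n R1 R2 eps = (\<lambda>(eta, phi, psi).
     (let c = cchar R1 R2 eps eta phi psi
      in if sin phi > 0 then ttime R1 R2 eps psi c 0 eta
         else (let m = turnpt n R1 R2 eps psi c eta in
               ttime R1 R2 eps psi c 0 m + ttime R1 R2 eps psi c eta m)))"

lemma Ksol_eq: "Ksol n R1 R2 eps h x = h (inflow_point R1 R2 eps x) * exp (- backward_time n R1 R2 eps x)"
  by (cases x) (simp add: Ksol_def inflow_point_def backward_time_def Let_def)

locale thin_layer =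
  fixes n R1 R2 eps :: real
  assumes R1_pos: "0 < R1" and R2_pos: "0 < R2" and eps_pos: "0 < eps"
    and eps_L_less_R1: "eps * Lcut n eps < R1" and eps_L_less_R2: "eps * Lcut n eps < R2"
begin

abbreviation "L \<equiv> Lcut n eps"
abbreviation "G \<equiv> Gclosed R1 R2 eps"
abbreviation "cosc \<equiv> cos_along R1 R2 eps"
abbreviation "rate \<equiv> arclength_rate R1 R2 eps"

lemma eps_mult_less:
  assumes "0 \<le> y" "y \<le> L"
  shows "eps * y < R1" "eps * y < R2"
proof -
  have "eps * y \<le> eps * L" using assms eps_pos by (auto intro: mult_left_mono)
  then show "eps * y < R1" "eps * y < R2" using eps_L_less_R1 eps_L_less_R2 by auto
qed

lemma Gint_eq_G: "0 \<le> y \<Longrightarrow> y \<le> L \<Longrightarrow> Gint R1 R2 eps y psi = G y psi"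
  using Gint_eq_Gclosed[OF R1_pos R2_pos _ _ eps_mult_less] eps_pos by auto

lemma G_zero [simp]: "G 0 psi = 0"
  by (simp add: Gclosed_def)

lemma ln_args_pos: "0 \<le> y \<Longrightarrow> y \<le> L \<Longrightarrow> 0 < 1 - eps * y / R1 \<and> 0 < 1 - eps * y / R2"
  using eps_mult_less[of y] R1_pos R2_pos by (auto simp: field_simps)

lemma G_strict_decreasing:
  assumes "0 \<le> y" "y < z" "z \<le> L"
  shows "G z psi < G y psi"
proof -
  have "eps * y < eps * z" using assms eps_pos by simp
  then have "eps * y / R1 < eps * z / R1" "eps * y / R2 < eps * z / R2"
    using R1_pos R2_pos by (auto simp: divide_strict_right_mono)
  moreover have "0 < 1 - eps * z / R1" "0 < 1 - eps * z / R2"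
    using ln_args_pos[of z] assms by auto
  ultimately have l1: "ln (1 - eps * z / R1) < ln (1 - eps * y / R1)"
    and l2: "ln (1 - eps * z / R2) < ln (1 - eps * y / R2)"
    by auto
  show ?thesis
  proof (cases "sin psi = 0")
    case True
    then have "(cos psi)^2 = 1" using sin_cos_squared_add[of psi] by simp
    then show ?thesis using l2 True by (simp add: Gclosed_def)
  next
    case False
    then have "(sin psi)^2 * ln (1 - eps * z / R1) < (sin psi)^2 * ln (1 - eps * y / R1)"
      using l1 by simp
    moreover have "(cos psi)^2 * ln (1 - eps * z / R2) \<le> (cos psi)^2 * ln (1 - eps * y / R2)"
      using l2 by (intro mult_left_mono) auto
    ultimately show ?thesis by (simp add: Gclosed_def)
  qed
qed

lemma G_decreasing: "0 \<le> y \<Longrightarrow> y \<le> z \<Longrightarrow> z \<le> L \<Longrightarrow> G z psi \<le> G y psi"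
  using G_strict_decreasing[of y z psi] by (cases "y = z") auto

lemma G_nonpos: "0 \<le> y \<Longrightarrow> y \<le> L \<Longrightarrow> G y psi \<le> 0"
  using G_decreasing[of 0 y psi] by simp

lemma continuous_on_G: "continuous_on {0..L} (\<lambda>y. G y psi)"
proof -
  have "\<And>y. y \<in> {0..L} \<Longrightarrow> 1 - eps * y / R1 \<noteq> 0 \<and> 1 - eps * y / R2 \<noteq> 0"
    using ln_args_pos by force
  then show ?thesis unfolding Gclosed_def
    by (intro continuous_intros) (use R1_pos R2_pos in auto)
qed

lemma minus_Fcoef_ge:
  assumes "0 \<le> y" "y \<le> L"
  shows "eps / (R1 + R2) \<le> - Fcoef R1 R2 eps y psi"
proof -
  have "0 < R1 - eps * y" "0 < R2 - eps * y" "0 \<le> eps * y"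
    using eps_mult_less[OF assms] assms eps_pos by auto
  then have "1 / (R1 + R2) \<le> 1 / (R1 - eps * y)" "1 / (R1 + R2) \<le> 1 / (R2 - eps * y)"
    using R1_pos R2_pos by (auto intro!: divide_left_mono)
  then have "(sin psi)^2 * (1 / (R1 + R2)) + (cos psi)^2 * (1 / (R1 + R2)) \<le>
      (sin psi)^2 * (1 / (R1 - eps * y)) + (cos psi)^2 * (1 / (R2 - eps * y))"
    by (intro add_mono mult_left_mono) auto
  then have "1 / (R1 + R2) \<le> (sin psi)^2 / (R1 - eps * y) + (cos psi)^2 / (R2 - eps * y)"
    by (simp add: add_divide_distrib[symmetric])
  then have "eps * (1 / (R1 + R2)) \<le> eps * ((sin psi)^2 / (R1 - eps * y) + (cos psi)^2 / (R2 - eps * y))"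
    using eps_pos by (intro mult_left_mono) auto
  then show ?thesis unfolding Fcoef_def by simp
qed

text \<open>This linear growth is what makes the travel-time integrand blow up at most like the inverse
  square root of the distance to a turning point.\<close>
lemma exp_minus_G_increment_ge:
  assumes "0 \<le> y" "y \<le> z" "z \<le> L"
  shows "eps / (R1 + R2) * (z - y) \<le> exp (- G z psi) - exp (- G y psi)"
proof (cases "y = z")
  case False
  then have "y < z" using assms by simp
  have deriv: "((\<lambda>y. exp (- G y psi)) has_real_derivative exp (- G w psi) * (- Fcoef R1 R2 eps w psi)) (at w)"
    if "0 \<le> w" "w \<le> L" for w
    using Gclosed_has_real_derivative[OF R1_pos R2_pos eps_mult_less[OF that], of psi UNIV]
    by (auto intro!: derivative_eq_intros)
  obtain w where w: "y < w" "w < z"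
    "exp (- G z psi) - exp (- G y psi) = (z - y) * (exp (- G w psi) * (- Fcoef R1 R2 eps w psi))"
    using MVT2[OF \<open>y < z\<close>, of "\<lambda>y. exp (- G y psi)" "\<lambda>w. exp (- G w psi) * (- Fcoef R1 R2 eps w psi)"]
      deriv assms by force
  have "1 \<le> exp (- G w psi)" using G_nonpos[of w psi] w assms by simp
  moreover have "eps / (R1 + R2) \<le> - Fcoef R1 R2 eps w psi" using minus_Fcoef_ge w assms by simp
  moreover have "0 \<le> eps / (R1 + R2)" using eps_pos R1_pos R2_pos by simp
  ultimately have "eps / (R1 + R2) \<le> exp (- G w psi) * (- Fcoef R1 R2 eps w psi)"
    by (metis mult_1 mult_mono order_trans zero_le_one)
  then have "(z - y) * (eps / (R1 + R2)) \<le> (z - y) * (exp (- G w psi) * (- Fcoef R1 R2 eps w psi))"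
    using \<open>y < z\<close> by (intro mult_left_mono) auto
  then show ?thesis unfolding w(3) by (simp only: mult.commute)
qed simp

lemma cos_along_at_start: "cosc (cp * exp (G eta psi)) psi eta = cp"
  by (simp add: cos_along_def exp_minus field_simps)

lemma cos_along_less_one_below:
  assumes "0 \<le> y" "y < eta" "eta \<le> L" "0 \<le> cp" "cp \<le> 1"
  shows "cosc (cp * exp (G eta psi)) psi y < 1"
proof -
  have "exp (G eta psi) * exp (- G y psi) < 1"
    using G_strict_decreasing[of y eta psi] assms by (simp add: exp_minus field_simps)
  then have "cp * (exp (G eta psi) * exp (- G y psi)) < cp * 1" if "cp \<noteq> 0"
    using assms that by (intro mult_strict_left_mono) auto
  then have "cp * (exp (G eta psi) * exp (- G y psi)) < 1" if "cp \<noteq> 0"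
    using assms that by (smt (verit))
  then show ?thesis by (cases "cp = 0") (simp_all add: cos_along_def mult.assoc)
qed

lemma cos_along_mono: "0 \<le> C \<Longrightarrow> mono_on {0..L} (cosc C psi)"
  by (auto intro!: mono_onI mult_left_mono simp: cos_along_def G_decreasing)

lemma continuous_on_cos_along: "continuous_on {0..L} (cosc C psi)"
  unfolding cos_along_def by (intro continuous_intros continuous_on_G)

definition nonturning :: "real \<Rightarrow> real \<Rightarrow> real \<Rightarrow> bool" where
  "nonturning C psi b \<longleftrightarrow> 0 \<le> C \<and> 0 \<le> b \<and> b \<le> L \<and>
     (\<forall>y. 0 \<le> y \<and> y < b \<longrightarrow> cosc C psi y < 1) \<and> cosc C psi b \<le> 1"

lemma ttime_eq_integral:
  "0 \<le> a \<Longrightarrow> b \<le> L \<Longrightarrow> ttime R1 R2 eps psi C a b = integral {a..b} (rate C psi)"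
  unfolding ttime_def arclength_rate_def cos_along_def by (intro integral_cong) (simp add: Gint_eq_G)

lemma nonturning_rate_nonneg:
  assumes "nonturning C psi b" "y \<in> {0..b}"
  shows "0 \<le> rate C psi y"
proof -
  have "cosc C psi y \<le> 1" using assms unfolding nonturning_def by (cases "y = b") force+
  moreover have "0 \<le> cosc C psi y" using assms by (simp add: nonturning_def cos_along_def)
  ultimately show ?thesis by (simp add: arclength_rate_def power_le_one)
qed

lemma nonturning_integrable:
  assumes "nonturning C psi b"
  shows "rate C psi integrable_on {0..b}"
proof -
  have C: "0 \<le> C" and b: "0 \<le> b" "b \<le> L" and below: "\<And>y. 0 \<le> y \<Longrightarrow> y < b \<Longrightarrow> cosc C psi y < 1"
    and at_b: "cosc C psi b \<le> 1"
    using assms unfolding nonturning_def by auto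
  have cont: "continuous_on {0..b} (cosc C psi)"
    by (rule continuous_on_subset[OF continuous_on_cos_along]) (use b in auto)
  have nonneg: "0 \<le> cosc C psi y" for y using C by (simp add: cos_along_def)
  show ?thesis
  proof (cases "cosc C psi b < 1")
    case True
    then have "cosc C psi y < 1" if "y \<in> {0..b}" for y
      using below that by (cases "y = b") auto
    then have "(cosc C psi y)^2 < 1" if "y \<in> {0..b}" for y
      using nonneg[of y] that by (simp add: power2_less_1_iff)
    then have "sqrt (1 - (cosc C psi y)^2) \<noteq> 0" if "y \<in> {0..b}" for y
      using that by fastforce
    then have "continuous_on {0..b} (rate C psi)"
      unfolding arclength_rate_def by (intro continuous_intros cont) auto
    then show ?thesis by (rule integrable_continuous_interval)
  next
    case False
    then have "cosc C psi b = 1" using at_b by simp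
    then have "0 < C" using C by (cases "C = 0") (auto simp: cos_along_def)
    have gap: "C * eps / (R1 + R2) * (b - y) \<le> 1 - cosc C psi y" if "y \<in> {0..b}" for y
      using mult_left_mono[OF exp_minus_G_increment_ge[of y b psi] C] that b \<open>cosc C psi b = 1\<close>
      by (simp add: cos_along_def algebra_simps)
    show ?thesis
      unfolding arclength_rate_def
      by (rule integrable_on_inverse_sqrt_one_minus_square[OF cont _ nonneg gap])
        (use \<open>0 < C\<close> eps_pos R1_pos R2_pos in auto)
  qed
qed

lemma nonturning_ttime_ge:
  assumes "nonturning C psi b"
  shows "b \<le> ttime R1 R2 eps psi C 0 b"
proof -
  have b: "0 \<le> b" "b \<le> L" using assms by (auto simp: nonturning_def)
  have ge1: "1 \<le> rate C psi y" if "y \<in> {0..<b}" for y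
  proof -
    have "0 \<le> cosc C psi y" "cosc C psi y < 1"
      using assms that by (auto simp: nonturning_def cos_along_def)
    then have "0 < 1 - (cosc C psi y)^2" "1 - (cosc C psi y)^2 \<le> 1"
      by (simp_all add: power2_less_1_iff)
    then show ?thesis by (simp add: arclength_rate_def)
  qed
  have "(\<lambda>y. if y = b then 1 else rate C psi y) integrable_on {0..b}"
    by (rule integrable_spike_finite[of "{b}" _ _ "rate C psi"]) (auto simp: nonturning_integrable[OF assms])
  then have "integral {0..b} (\<lambda>y. 1 :: real) \<le> integral {0..b} (\<lambda>y. if y = b then 1 else rate C psi y)"
    by (intro integral_le) (auto simp: ge1)
  also have "\<dots> = integral {0..b} (rate C psi)"
    by (rule integral_spike[of "{b}"]) auto
  finally show ?thesis using b by (simp add: ttime_eq_integral)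
qed

lemma nonturning_ttime_nonneg:
  assumes "nonturning C psi b" "0 \<le> a"
  shows "0 \<le> ttime R1 R2 eps psi C a b"
proof -
  have "b \<le> L" using assms by (simp add: nonturning_def)
  moreover have "rate C psi integrable_on {a..b}"
    by (rule integrable_subinterval_real[OF nonturning_integrable[OF assms(1)]]) (use assms in auto)
  ultimately show ?thesis
    using assms nonturning_rate_nonneg[OF assms(1)] by (auto simp: ttime_eq_integral intro!: integral_nonneg)
qed

lemma turnpt_eq_first_hitting_point:
  assumes "0 \<le> eta"
  shows "turnpt n R1 R2 eps psi C eta =
    (if \<exists>y\<in>{eta..L}. 1 \<le> cosc C psi y then Inf {y\<in>{eta..L}. 1 \<le> cosc C psi y} else L)"
proof -
  have "{y\<in>{eta..L}. 1 \<le> C * exp (- Gint R1 R2 eps y psi)} = {y\<in>{eta..L}. 1 \<le> cosc C psi y}"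
    using assms by (auto simp: cos_along_def Gint_eq_G)
  then show ?thesis unfolding turnpt_def by (metis (no_types, lifting) mem_Collect_eq)
qed

lemma turning_point:
  assumes eta: "0 \<le> eta" "eta \<le> L" and cp: "0 \<le> cp" "cp \<le> 1"
    and C: "C = cp * exp (G eta psi)"
  defines "m \<equiv> turnpt n R1 R2 eps psi C eta"
  shows "eta \<le> m" "nonturning C psi m"
    "\<And>t. m \<le> t \<longleftrightarrow> L \<le> t \<or> (eta \<le> t \<and> t \<le> L \<and> 1 \<le> cosc C psi t)"
proof -
  have "0 \<le> C" using C cp by simp
  have cont: "continuous_on {eta..L} (cosc C psi)"
    by (rule continuous_on_subset[OF continuous_on_cos_along]) (use eta in auto)
  have mono: "mono_on {eta..L} (cosc C psi)"
    by (rule mono_on_subset[OF cos_along_mono[OF \<open>0 \<le> C\<close>]]) (use eta in auto)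
  have start: "cosc C psi eta \<le> 1" using C cp cos_along_at_start by simp
  note hit = first_hitting_point[OF eta(2) cont mono start,
      folded turnpt_eq_first_hitting_point[OF eta(1)], folded m_def]
  show "eta \<le> m" "\<And>t. m \<le> t \<longleftrightarrow> L \<le> t \<or> (eta \<le> t \<and> t \<le> L \<and> 1 \<le> cosc C psi t)"
    using hit by auto
  have "cosc C psi y < 1" if "0 \<le> y" "y < m" for y
    using hit(3)[of y] cos_along_less_one_below[of y eta cp psi] that eta cp C by (cases "y < eta") auto
  then show "nonturning C psi m"
    unfolding nonturning_def using hit \<open>0 \<le> C\<close> eta by auto
qed

lemma cchar_eq: "0 \<le> eta \<Longrightarrow> eta \<le> L \<Longrightarrow> cchar R1 R2 eps eta phi psi = cos phi * exp (G eta psi)"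
  by (simp add: cchar_def Gint_eq_G)

lemma cos_bounds_Dom:
  assumes "(eta, phi, psi) \<in> Dom n eps"
  shows "0 \<le> cos phi" "cos phi \<le> 1"
  using assms by (auto simp: Dom_def intro!: cos_ge_zero)

lemma cos_less_one_Dom:
  assumes "(eta, phi, psi) \<in> Dom n eps" "phi \<noteq> 0"
  shows "cos phi < 1"
proof -
  have "cos \<bar>phi\<bar> < cos 0"
    by (rule cos_monotone_0_pi) (use assms in \<open>auto simp: Dom_def\<close>)
  then show ?thesis by simp
qed

lemma cchar_bounds:
  assumes "(eta, phi, psi) \<in> Dom n eps"
  shows "0 \<le> cos phi * exp (G eta psi)" "cos phi * exp (G eta psi) \<le> 1"
proof -
  have "exp (G eta psi) \<le> 1" using G_nonpos assms by (simp add: Dom_def)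
  then show "0 \<le> cos phi * exp (G eta psi)" "cos phi * exp (G eta psi) \<le> 1"
    using cos_bounds_Dom[OF assms] by (auto intro: mult_le_one)
qed

lemma nonturning_at_height:
  assumes x: "(eta, phi, psi) \<in> Dom n eps"
  shows "nonturning (cchar R1 R2 eps eta phi psi) psi eta"
proof -
  have eta: "0 \<le> eta" "eta \<le> L" using x by (auto simp: Dom_def)
  show ?thesis
    using cchar_eq[OF eta] cos_bounds_Dom[OF x] cos_along_less_one_below[OF _ _ eta(2)]
      cos_along_at_start eta by (auto simp: nonturning_def)
qed

lemma backward_time_ge_height:
  assumes x: "(eta, phi, psi) \<in> Dom n eps"
  shows "eta \<le> backward_time n R1 R2 eps (eta, phi, psi)"
proof -
  define C where "C = cchar R1 R2 eps eta phi psi"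
  define m where "m = turnpt n R1 R2 eps psi C eta"
  have eta: "0 \<le> eta" "eta \<le> L" using x by (auto simp: Dom_def)
  note turn = turning_point[OF eta cos_bounds_Dom[OF x] cchar_eq[OF eta, of phi psi], folded C_def]
  have "eta \<le> ttime R1 R2 eps psi C 0 eta"
    using nonturning_ttime_ge[OF nonturning_at_height[OF x]] by (simp add: C_def)
  moreover have "eta \<le> ttime R1 R2 eps psi C 0 m + ttime R1 R2 eps psi C eta m"
    using turn(1) nonturning_ttime_ge[OF turn(2)] nonturning_ttime_nonneg[OF turn(2) eta(1)]
    unfolding m_def by linarith
  ultimately show ?thesis
    by (simp add: backward_time_def Let_def C_def[symmetric] m_def[symmetric])
qed

lemma abs_exp_Ksol_le:
  assumes x: "x \<in> Dom n eps" and beta: "0 \<le> beta" "beta \<le> 1"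
  shows "\<bar>exp (beta * fst x) * Ksol n R1 R2 eps h x\<bar> \<le> \<bar>h (inflow_point R1 R2 eps x)\<bar>"
proof -
  have "beta * fst x \<le> fst x" using x beta by (auto simp: Dom_def mult_left_le_one_le)
  also have "\<dots> \<le> backward_time n R1 R2 eps x"
    using backward_time_ge_height x by (cases x) auto
  finally have "exp (beta * fst x - backward_time n R1 R2 eps x) \<le> 1" by simp
  moreover have "exp (beta * fst x) * Ksol n R1 R2 eps h x
      = h (inflow_point R1 R2 eps x) * exp (beta * fst x - backward_time n R1 R2 eps x)"
    by (simp add: Ksol_eq exp_diff exp_minus divide_inverse mult_ac)
  ultimately show ?thesis by (simp add: abs_mult mult_left_le)
qed

subsection \<open>Measurability\<close>

abbreviation "Dom_oblique \<equiv> Dom n eps - {x. fst (snd x) = 0}"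

lemma Dom_oblique_sets_lebesgue: "Dom_oblique \<in> sets lebesgue"
  using Dom_sets_lebesgue negligible_imp_sets[OF negligible_snd_fst_eq_0] by auto

lemma inflow_point_in_Dplus:
  assumes x: "x \<in> Dom_oblique"
  shows "inflow_point R1 R2 eps x \<in> Dplus"
proof -
  obtain eta phi psi where x_eq: "x = (eta, phi, psi)" by (cases x)
  have D: "(eta, phi, psi) \<in> Dom n eps" and "phi \<noteq> 0" using x x_eq by auto
  then have eta: "0 \<le> eta" "eta \<le> L" and psi: "-pi \<le> psi" "psi \<le> pi"
    by (auto simp: Dom_def)
  define C where "C = cchar R1 R2 eps eta phi psi"
  have C_eq: "C = cos phi * exp (G eta psi)" unfolding C_def using cchar_eq[OF eta] .
  have "C \<le> cos phi"
    unfolding C_eq using G_nonpos[OF eta] cos_bounds_Dom[OF D] by (intro mult_left_le) auto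
  then have "C < 1" using cos_less_one_Dom[OF D \<open>phi \<noteq> 0\<close>] by simp
  have "0 \<le> C" unfolding C_eq using cos_bounds_Dom[OF D] by simp
  have "0 < sin (arccos C)"
    using \<open>0 \<le> C\<close> \<open>C < 1\<close> by (simp add: sin_arccos power2_less_1_iff)
  moreover have "0 \<le> arccos C" "arccos C \<le> pi/2"
    using \<open>0 \<le> C\<close> \<open>C < 1\<close> by (intro arccos_lbound arccos_le_pi2; simp)+
  ultimately show ?thesis
    using psi by (simp add: Dplus_def inflow_point_def x_eq C_def)
qed

lemma continuous_on_inflow_point: "continuous_on Dom_oblique (inflow_point R1 R2 eps)"
proof -
  have ln: "\<And>x. x \<in> Dom_oblique \<Longrightarrow> 1 - eps * fst x / R1 \<noteq> 0 \<and> 1 - eps * fst x / R2 \<noteq> 0"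
    using ln_args_pos by (force simp: Dom_def)
  have range: "\<forall>x\<in>Dom_oblique. -1 \<le> cos (fst (snd x)) * exp (G (fst x) (snd (snd x))) \<and>
      cos (fst (snd x)) * exp (G (fst x) (snd (snd x))) \<le> 1"
    using cchar_bounds by (smt (verit) DiffD1 prod.collapse)
  have "continuous_on Dom_oblique
      (\<lambda>x. (arccos (cos (fst (snd x)) * exp (G (fst x) (snd (snd x)))), snd (snd x)))"
    unfolding Gclosed_def
    by (intro continuous_intros continuous_on_arccos) (use ln range R1_pos R2_pos in \<open>auto simp: Gclosed_def\<close>)
  then show ?thesis
    by (rule continuous_on_cong[THEN iffD1, rotated 2])
      (auto simp: inflow_point_def cchar_eq Dom_def)
qed

text \<open>Inverse of the inflow map on each of the half-domains sign phi = s.\<close>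
definition lift_from_inflow :: "real \<Rightarrow> real \<times> real \<times> real \<Rightarrow> real \<times> real \<times> real" where
  "lift_from_inflow s p =
     (fst p, s * arccos (cos (fst (snd p)) / exp (G (fst p) (snd (snd p)))), snd (snd p))"

lemma lift_from_inflow_differentiable:
  assumes "0 \<le> eta" "eta \<le> L" "0 \<le> cos phi0" "cos phi0 < exp (G eta psi)"
  shows "lift_from_inflow s differentiable (at (eta, phi0, psi))"
proof -
  have "-1 < cos phi0 / exp (G eta psi)" "cos phi0 / exp (G eta psi) < 1"
    using assms by (simp_all add: less_le_trans[of _ 0])
  moreover have "0 < 1 - eps * eta / R1" "0 < 1 - eps * eta / R2" using ln_args_pos assms by auto
  ultimately show ?thesis
    unfolding differentiable_def lift_from_inflow_def Gclosed_def
    using R1_pos R2_pos by - (rule exI, (rule derivative_intros | (simp; fail))+)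
qed

lemma lift_from_inflow_point:
  assumes x: "(eta, phi, psi) \<in> Dom_oblique"
  defines "phi0 \<equiv> fst (inflow_point R1 R2 eps (eta, phi, psi))"
  shows "(eta, phi, psi) = lift_from_inflow (sgn phi) (eta, phi0, psi)"
    and "0 \<le> cos phi0" "cos phi0 < exp (G eta psi)"
proof -
  have D: "(eta, phi, psi) \<in> Dom n eps" and "phi \<noteq> 0" using x by auto
  then have eta: "0 \<le> eta" "eta \<le> L" and phi: "-pi/2 \<le> phi" "phi \<le> pi/2" by (auto simp: Dom_def)
  have C: "cchar R1 R2 eps eta phi psi = cos phi * exp (G eta psi)" using cchar_eq[OF eta] .
  have cos_phi0: "cos phi0 = cos phi * exp (G eta psi)"
    unfolding phi0_def using cchar_bounds[OF D] by (simp add: inflow_point_def C cos_arccos)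
  then show "0 \<le> cos phi0" "cos phi0 < exp (G eta psi)"
    using cchar_bounds[OF D] cos_less_one_Dom[OF D \<open>phi \<noteq> 0\<close>] by auto
  have "arccos (cos phi) = \<bar>phi\<bar>"
    using phi by (cases "0 \<le> phi") (simp_all add: arccos_cos arccos_cos2)
  then show "(eta, phi, psi) = lift_from_inflow (sgn phi) (eta, phi0, psi)"
    unfolding lift_from_inflow_def using cos_phi0 \<open>phi \<noteq> 0\<close> by (auto simp: sgn_if)
qed

lemma negligible_inflow_preimage:
  assumes "negligible B"
  shows "negligible {x \<in> Dom_oblique. inflow_point R1 R2 eps x \<in> B}"
proof -
  define W where "W = {p. 0 \<le> fst p \<and> fst p \<le> L \<and> snd p \<in> B \<and>
     0 \<le> cos (fst (snd p)) \<and> cos (fst (snd p)) < exp (G (fst p) (snd (snd p)))}"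
  have "negligible W"
    by (rule negligible_subset[OF negligible_UNIV_Times[OF assms]]) (auto simp: W_def)
  moreover have "lift_from_inflow s differentiable_on W" for s
    by (intro differentiable_at_imp_differentiable_on) (auto simp: W_def intro!: lift_from_inflow_differentiable)
  ultimately have negl: "negligible (lift_from_inflow s ` W)" for s
    by (intro negligible_differentiable_image_negligible) auto
  have "{x \<in> Dom_oblique. inflow_point R1 R2 eps x \<in> B} \<subseteq> (\<Union>s\<in>{1, -1}. lift_from_inflow s ` W)"
  proof
    fix x assume x: "x \<in> {x \<in> Dom_oblique. inflow_point R1 R2 eps x \<in> B}"
    obtain eta phi psi where x_eq: "x = (eta, phi, psi)" by (cases x)
    let ?p = "(eta, fst (inflow_point R1 R2 eps x), psi)"
    have "?p \<in> W"
      using lift_from_inflow_point(2,3)[of eta phi psi] x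
      by (auto simp: W_def Dom_def inflow_point_def x_eq)
    moreover have "sgn phi \<in> {1, -1}" using x by (auto simp: sgn_if x_eq)
    ultimately show "x \<in> (\<Union>s\<in>{1, -1}. lift_from_inflow s ` W)"
      using lift_from_inflow_point(1)[of eta phi psi] x unfolding x_eq by blast
  qed
  then show ?thesis by (rule negligible_subset[rotated]) (use negl in auto)
qed

lemma inflow_point_measurable:
  "inflow_point R1 R2 eps \<in> lebesgue_on Dom_oblique \<rightarrow>\<^sub>M lebesgue_on Dplus"
proof (rule measurableI)
  fix x assume "x \<in> space (lebesgue_on Dom_oblique)"
  then show "inflow_point R1 R2 eps x \<in> space (lebesgue_on Dplus)"
    using inflow_point_in_Dplus by simp
next
  fix A assume "A \<in> sets (lebesgue_on Dplus)"
  then have "A \<in> sets lebesgue" using Dplus_sets_lebesgue by (auto simp: sets_restrict_space_iff)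
  then obtain S N N' where SN: "A = S \<union> N" "N \<subseteq> N'" "N' \<in> null_sets lborel" "S \<in> sets lborel"
    by (rule sets_completionE)
  have "inflow_point R1 R2 eps \<in> borel_measurable (lebesgue_on Dom_oblique)"
    by (rule continuous_imp_measurable_on_sets_lebesgue[OF continuous_on_inflow_point Dom_oblique_sets_lebesgue])
  then have S: "inflow_point R1 R2 eps -` S \<inter> Dom_oblique \<in> sets (lebesgue_on Dom_oblique)"
    using measurable_sets[of _ "lebesgue_on Dom_oblique" borel S] SN(4) by simp
  have "negligible N'" using SN(3) by (simp add: negligible_iff_null_sets null_sets_completionI)
  then have "negligible (inflow_point R1 R2 eps -` N \<inter> Dom_oblique)"
    by (rule negligible_subset[OF negligible_inflow_preimage]) (use SN(2) in auto)
  then have N: "inflow_point R1 R2 eps -` N \<inter> Dom_oblique \<in> sets (lebesgue_on Dom_oblique)"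
    using Dom_oblique_sets_lebesgue by (simp add: sets_restrict_space_iff negligible_imp_sets)
  have "inflow_point R1 R2 eps -` A \<inter> space (lebesgue_on Dom_oblique)
      = (inflow_point R1 R2 eps -` S \<inter> Dom_oblique) \<union> (inflow_point R1 R2 eps -` N \<inter> Dom_oblique)"
    using SN(1) by auto
  then show "inflow_point R1 R2 eps -` A \<inter> space (lebesgue_on Dom_oblique) \<in> sets (lebesgue_on Dom_oblique)"
    using S N by auto
qed

lemma cchar_measurable:
  "(\<lambda>x. cchar R1 R2 eps (fst x) (fst (snd x)) (snd (snd x))) \<in> borel_measurable (lebesgue_on Dom_oblique)"
proof -
  have "(\<lambda>x :: real \<times> real \<times> real. cos (fst (snd x)) * exp (G (fst x) (snd (snd x))))
      \<in> borel_measurable (lebesgue_on Dom_oblique)"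
    by (rule borel_measurable_lebesgue_on_borel) measurable
  then show ?thesis
    by (rule measurable_cong[THEN iffD1, rotated]) (auto simp: cchar_eq Dom_def)
qed

lemma turnpt_measurable:
  "(\<lambda>x. turnpt n R1 R2 eps (snd (snd x)) (cchar R1 R2 eps (fst x) (fst (snd x)) (snd (snd x))) (fst x))
     \<in> borel_measurable (lebesgue_on Dom_oblique)"
proof (subst borel_measurable_iff_le, intro allI)
  fix t
  define Q where "Q = {x :: real \<times> real \<times> real. L \<le> t \<or> (fst x \<le> t \<and> t \<le> L \<and>
      1 \<le> cos (fst (snd x)) * exp (G (fst x) (snd (snd x))) * exp (- G t (snd (snd x))))}"
  have "Q \<in> sets borel" unfolding Q_def by measurable
  then have "Dom_oblique \<inter> Q \<in> sets (lebesgue_on Dom_oblique)"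
    using Dom_oblique_sets_lebesgue sets_lebesgue_of_borel by (auto simp: sets_restrict_space_iff)
  moreover have "turnpt n R1 R2 eps psi (cchar R1 R2 eps eta phi psi) eta \<le> t \<longleftrightarrow> (eta, phi, psi) \<in> Q"
    if "(eta, phi, psi) \<in> Dom n eps" for eta phi psi
  proof -
    have eta: "0 \<le> eta" "eta \<le> L" using that by (auto simp: Dom_def)
    show ?thesis
      using turning_point(3)[OF eta cos_bounds_Dom[OF that] cchar_eq[OF eta, of phi psi]]
      by (simp add: Q_def cos_along_def cchar_eq[OF eta])
  qed
  ultimately show "{x \<in> space (lebesgue_on Dom_oblique).
      turnpt n R1 R2 eps (snd (snd x)) (cchar R1 R2 eps (fst x) (fst (snd x)) (snd (snd x))) (fst x) \<le> t}
     \<in> sets (lebesgue_on Dom_oblique)"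
    by (elim back_subst[of "\<lambda>A. A \<in> _"]) force
qed

lemma ttime_eq_nn_integral:
  assumes "nonturning C psi b" "0 \<le> a"
  shows "ttime R1 R2 eps psi C a b =
     enn2real (\<integral>\<^sup>+ y. ennreal (if a \<le> y \<and> y \<le> b then rate C psi y else 0) \<partial>lborel)"
proof -
  have "b \<le> L" using assms by (simp add: nonturning_def)
  have "rate C psi integrable_on {a..b}"
    by (rule integrable_subinterval_real[OF nonturning_integrable[OF assms(1)]]) (use assms in auto)
  then have "(rate C psi has_integral ttime R1 R2 eps psi C a b) {a..b}"
    using assms(2) \<open>b \<le> L\<close> by (simp add: ttime_eq_integral integrable_integral)
  moreover have nonneg: "\<And>y. y \<in> {a..b} \<Longrightarrow> 0 \<le> rate C psi y"
    using nonturning_rate_nonneg[OF assms(1)] assms(2) by auto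
  ultimately have "(\<integral>\<^sup>+ y. ennreal (rate C psi y) * indicator {a..b} y \<partial>lborel) = ennreal (ttime R1 R2 eps psi C a b)"
    by (intro nn_integral_has_integral_lebesgue')
  moreover have "(\<lambda>y. ennreal (rate C psi y) * indicator {a..b} y) =
      (\<lambda>y. ennreal (if a \<le> y \<and> y \<le> b then rate C psi y else 0))"
    by (auto simp: indicator_def)
  ultimately show ?thesis using nonturning_ttime_nonneg[OF assms] by simp
qed

lemma backward_time_measurable:
  "backward_time n R1 R2 eps \<in> borel_measurable (lebesgue_on Dom_oblique)"
proof -
  define C where "C x = cchar R1 R2 eps (fst x) (fst (snd x)) (snd (snd x))" for x :: "real \<times> real \<times> real"
  define m where "m x = turnpt n R1 R2 eps (snd (snd x)) (C x) (fst x)" for x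
  define T where "T a b x = enn2real (\<integral>\<^sup>+ y. ennreal
      (if a x \<le> y \<and> y \<le> b x then rate (C x) (snd (snd x)) y else 0) \<partial>lborel)"
    for a b :: "real \<times> real \<times> real \<Rightarrow> real" and x
  have [measurable]: "C \<in> borel_measurable (lebesgue_on Dom_oblique)"
    using cchar_measurable by (simp add: C_def[abs_def])
  have [measurable]: "m \<in> borel_measurable (lebesgue_on Dom_oblique)"
    using turnpt_measurable by (simp add: m_def[abs_def] C_def)
  have [measurable]: "(\<lambda>x :: real \<times> real \<times> real. fst x) \<in> borel_measurable (lebesgue_on Dom_oblique)"
    "(\<lambda>x :: real \<times> real \<times> real. fst (snd x)) \<in> borel_measurable (lebesgue_on Dom_oblique)"
    "(\<lambda>x :: real \<times> real \<times> real. snd (snd x)) \<in> borel_measurable (lebesgue_on Dom_oblique)"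
    by (rule borel_measurable_lebesgue_on_borel; measurable)+
  have "(\<lambda>x. if 0 < sin (fst (snd x)) then T (\<lambda>_. 0) fst x else T (\<lambda>_. 0) m x + T fst m x)
      \<in> borel_measurable (lebesgue_on Dom_oblique)"
    unfolding T_def by measurable
  moreover have eq: "backward_time n R1 R2 eps x =
      (if 0 < sin (fst (snd x)) then T (\<lambda>_. 0) fst x else T (\<lambda>_. 0) m x + T fst m x)"
    if "x \<in> Dom_oblique" for x
  proof -
    obtain eta phi psi where x: "x = (eta, phi, psi)" by (cases x)
    have D: "(eta, phi, psi) \<in> Dom n eps" and eta: "0 \<le> eta" "eta \<le> L"
      using that by (auto simp: x Dom_def)
    note turn = turning_point[OF eta cos_bounds_Dom[OF D] cchar_eq[OF eta, of phi psi]]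
    show ?thesis
      using ttime_eq_nn_integral[OF nonturning_at_height[OF D] order_refl]
        ttime_eq_nn_integral[OF turn(2) order_refl] ttime_eq_nn_integral[OF turn(2) eta(1)]
      unfolding backward_time_def T_def m_def C_def x by (simp add: Let_def cong: if_cong)
  qed
  ultimately show ?thesis
    by (rule measurable_cong[THEN iffD2, rotated]) (simp add: eq)
qed

lemma weighted_Ksol_measurable:
  assumes "h \<in> borel_measurable (lebesgue_on Dplus)"
  shows "(\<lambda>x. exp (beta * fst x) * Ksol n R1 R2 eps h x) \<in> borel_measurable (lebesgue_on (Dom n eps))"
proof (rule borel_measurable_lebesgue_on_diff_negligible[OF Dom_sets_lebesgue negligible_snd_fst_eq_0])
  have [measurable]: "(\<lambda>x. h (inflow_point R1 R2 eps x)) \<in> borel_measurable (lebesgue_on Dom_oblique)"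
    using measurable_comp[OF inflow_point_measurable assms] by (simp add: comp_def)
  have [measurable]: "(\<lambda>x :: real \<times> real \<times> real. fst x) \<in> borel_measurable (lebesgue_on Dom_oblique)"
    by (rule borel_measurable_lebesgue_on_borel) measurable
  note backward_time_measurable [measurable]
  show "(\<lambda>x. exp (beta * fst x) * Ksol n R1 R2 eps h x) \<in> borel_measurable (lebesgue_on Dom_oblique)"
    unfolding Ksol_eq by measurable
qed

lemma AE_inflow_point:
  assumes "AE y in lebesgue_on Dplus. P y"
  shows "AE x in lebesgue_on (Dom n eps). P (inflow_point R1 R2 eps x)"
proof -
  obtain N where N: "{y \<in> space (lebesgue_on Dplus). \<not> P y} \<subseteq> N"
    "emeasure (lebesgue_on Dplus) N = 0" "N \<in> sets (lebesgue_on Dplus)"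
    using assms by (rule AE_E)
  then have "N \<in> null_sets (lebesgue_on Dplus)" by auto
  then have "negligible N"
    using Dplus_sets_lebesgue by (simp add: null_sets_restrict_space negligible_iff_null_sets)
  define Z where "Z = {x. fst (snd x) = 0} \<union> {x \<in> Dom_oblique. inflow_point R1 R2 eps x \<in> N}"
  have "negligible Z"
    unfolding Z_def by (intro negligible_Un negligible_snd_fst_eq_0 negligible_inflow_preimage \<open>negligible N\<close>)
  then have "Dom n eps \<inter> Z \<in> null_sets (lebesgue_on (Dom n eps))"
    using Dom_sets_lebesgue negligible_subset[of Z "Dom n eps \<inter> Z"]
    by (simp add: null_sets_restrict_space negligible_iff_null_sets)
  moreover have "{x \<in> space (lebesgue_on (Dom n eps)). \<not> P (inflow_point R1 R2 eps x)} \<subseteq> Dom n eps \<inter> Z"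
    using N(1) inflow_point_in_Dplus by (auto simp: Z_def)
  ultimately show ?thesis by (rule AE_I')
qed

lemma esssup_weighted_Ksol_le:
  assumes h: "h \<in> borel_measurable (lebesgue_on Dplus)" and beta: "0 \<le> beta" "beta \<le> 1"
  shows "esssup (lebesgue_on (Dom n eps)) (\<lambda>x. ereal \<bar>exp (beta * fst x) * Ksol n R1 R2 eps h x\<bar>)
    \<le> esssup (lebesgue_on Dplus) (\<lambda>x. ereal \<bar>h x\<bar>)"
    (is "_ \<le> ?M")
proof (rule esssup_I)
  show "(\<lambda>x. ereal \<bar>exp (beta * fst x) * Ksol n R1 R2 eps h x\<bar>) \<in> borel_measurable (lebesgue_on (Dom n eps))"
    using weighted_Ksol_measurable[OF h] by measurable
  have "AE x in lebesgue_on (Dom n eps). ereal \<bar>h (inflow_point R1 R2 eps x)\<bar> \<le> ?M"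
    by (rule AE_inflow_point[OF esssup_AE])
  moreover have "AE x in lebesgue_on (Dom n eps).
      ereal \<bar>exp (beta * fst x) * Ksol n R1 R2 eps h x\<bar> \<le> ereal \<bar>h (inflow_point R1 R2 eps x)\<bar>"
    by (rule AE_I2) (simp add: abs_exp_Ksol_le beta)
  ultimately show "AE x in lebesgue_on (Dom n eps). ereal \<bar>exp (beta * fst x) * Ksol n R1 R2 eps h x\<bar> \<le> ?M"
    by eventually_elim (meson order_trans)
qed

end

lemma thin_layer_for_small_eps:
  fixes n R1 R2 :: real
  assumes "0 < n" "n < 1/2" "0 < R1" "0 < R2"
  shows "\<exists>eps0>0. \<forall>eps. 0 < eps \<and> eps < 1 \<and> eps < eps0 \<longrightarrow> thin_layer n R1 R2 eps"
proof -
  define r where "r = min R1 R2"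
  have r: "0 < r" "r \<le> R1" "r \<le> R2" using assms unfolding r_def by auto
  show ?thesis
  proof (intro exI[of _ "r^2"] conjI allI impI)
    show "0 < r^2" using r by simp
    fix eps assume e: "0 < eps \<and> eps < 1 \<and> eps < r^2"
    have "eps * Lcut n eps = eps powr (1 - n)"
      unfolding Lcut_def using e by (simp add: powr_diff powr_minus divide_inverse)
    also have "\<dots> \<le> eps powr (1/2)"
      using e assms by (intro powr_mono') auto
    also have "\<dots> = sqrt eps" using e by (simp add: powr_half_sqrt)
    also have "\<dots> < sqrt (r^2)" using e by (intro real_sqrt_less_mono) auto
    also have "\<dots> = r" using r by simp
    finally have "eps * Lcut n eps < r" .
    then show "thin_layer n R1 R2 eps" using e r assms by unfold_locales auto
  qed
qed

theorem lemma4p4: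
  fixes n R1 R2 :: real
  assumes "0 < n" "n < 1/2" "0 < R1" "0 < R2"
  shows "\<exists>eps0>0. \<forall>eps. 0 < eps \<and> eps < 1 \<and> eps < eps0 \<longrightarrow>
     (\<forall>(h :: real \<times> real \<Rightarrow> real). h \<in> borel_measurable (lebesgue_on Dplus) \<longrightarrow>
        (\<forall>beta::real. 0 \<le> beta \<and> beta \<le> 1 \<longrightarrow>
           esssup (lebesgue_on (Dom n eps))
              (\<lambda>(eta, phi, psi). ereal (\<bar>exp (beta * eta) * Ksol n R1 R2 eps h (eta, phi, psi)\<bar>))
           \<le> esssup (lebesgue_on Dplus) (\<lambda>x. ereal \<bar>h x\<bar>))
      \<and> esssup (lebesgue_on (Dom n eps)) (\<lambda>x. ereal \<bar>Ksol n R1 R2 eps h x\<bar>)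
           \<le> esssup (lebesgue_on Dplus) (\<lambda>x. ereal \<bar>h x\<bar>))"
proof -
  obtain eps0 where "0 < eps0" and layer: "\<And>eps. 0 < eps \<and> eps < 1 \<and> eps < eps0 \<Longrightarrow> thin_layer n R1 R2 eps"
    using thin_layer_for_small_eps[OF assms] by blast
  show ?thesis
  proof (intro exI[of _ eps0] conjI allI impI \<open>0 < eps0\<close>)
    fix eps and h :: "real \<times> real \<Rightarrow> real" and beta :: real
    assume "0 < eps \<and> eps < 1 \<and> eps < eps0" and h: "h \<in> borel_measurable (lebesgue_on Dplus)"
    then interpret thin_layer n R1 R2 eps by (intro layer)
    have "(\<lambda>(eta, phi, psi). ereal \<bar>exp (beta * eta) * Ksol n R1 R2 eps h (eta, phi, psi)\<bar>)
        = (\<lambda>x. ereal \<bar>exp (beta * fst x) * Ksol n R1 R2 eps h x\<bar>)"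
      by (auto simp: fun_eq_iff)
    then show "0 \<le> beta \<and> beta \<le> 1 \<Longrightarrow> esssup (lebesgue_on (Dom n eps))
        (\<lambda>(eta, phi, psi). ereal \<bar>exp (beta * eta) * Ksol n R1 R2 eps h (eta, phi, psi)\<bar>)
        \<le> esssup (lebesgue_on Dplus) (\<lambda>x. ereal \<bar>h x\<bar>)"
      using esssup_weighted_Ksol_le[OF h] by simp
    show "esssup (lebesgue_on (Dom n eps)) (\<lambda>x. ereal \<bar>Ksol n R1 R2 eps h x\<bar>)
        \<le> esssup (lebesgue_on Dplus) (\<lambda>x. ereal \<bar>h x\<bar>)"
      using esssup_weighted_Ksol_le[OF h, of 0] by simp
  qed
qed
end
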